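(* Let $n_b\ge 1$, $d_l\ge 3$, $L\ge 3$, $M\ge 1$ be integers, and let $H$ be a quasi-cyclic SC-LDPC parity-check matrix with parameters $(n_b,d_l,L,M)$ and reuse $T=1$ (as defined in the context). Then, for every choice of the shift values $p_{x,y}$ satisfying the reuse-$1$ condition, the Tanner graph of $H$ contains a cycle of length $6$; in particular its girth is at most $6$.
   Context: Quasi-cyclic SC-LDPC matrix: fix integers $n_b\ge1$ (bit nodes per protograph; one check node per protograph), $d_l\ge 2$, $L\ge1$, $M\ge1$. $H$ is a binary block matrix with $L+d_l-1$ block rows (indexed $x=1,\dots,L+d_l-1$) and $n_bL$ block columns (indexed $y=1,\dots,n_bL$), each block of size $M\times M$. For a block column $y$ put $t(y)=\lceil y/n_b\rceil$. Block $(x,y)$ is the all-zero matrix unless $t(y)\le x\le t(y)+d_l-1$, in which case it equals the circulant permutation matrix $I_{(p_{x,y})}$ for a shift value $p_{x,y}\in\{0,\dots,M-1\}$; here $I_{(p)}$ is the $M\times M$ matrix whose row $r$ ($0\le r\le M-1$) has a single $1$, in column $(r+p)\bmod M$, and zeros elsewhere. Reuse-$T$ condition (periodic time-variant construction with period $T$): $p_{x+T,\,y+Tn_b}=p_{x,y}$ whenever both $(x,y)$ and $(x+T,y+Tn_b)$ are nonzero blocks of $H$; otherwise the shift values are arbitrary. The Tanner graph of $H$ is the bipartite graph with one bit node per column and one check node per row of $H$, a bit node and check node being adjacent iff the corresponding entry of $H$ is $1$. The girth is the length of a shortest cycle in the Tanner graph. *)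

theory Defs
  imports Main "HOL-Library.Extended_Nat"
begin

text \<open>Block column y (1-based) belongs to time t(y) = ceiling(y / n_b).\<close>
definition tblk :: "nat \<Rightarrow> nat \<Rightarrow> nat" where
  "tblk nb y = (y + nb - 1) div nb"

definition nz_block :: "nat \<Rightarrow> nat \<Rightarrow> nat \<Rightarrow> nat \<Rightarrow> nat \<Rightarrow> bool" where
  "nz_block nb dl L x y \<longleftrightarrow>
     1 \<le> x \<and> x \<le> L + dl - 1 \<and> 1 \<le> y \<and> y \<le> nb * L \<and>
     tblk nb y \<le> x \<and> x \<le> tblk nb y + dl - 1"

definition valid_shifts :: "nat \<Rightarrow> nat \<Rightarrow> nat \<Rightarrow> nat \<Rightarrow> (nat \<Rightarrow> nat \<Rightarrow> nat) \<Rightarrow> bool" where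
  "valid_shifts nb dl L M p \<longleftrightarrow> (\<forall>x y. nz_block nb dl L x y \<longrightarrow> p x y < M)"

definition reuse_cond :: "nat \<Rightarrow> nat \<Rightarrow> nat \<Rightarrow> nat \<Rightarrow> (nat \<Rightarrow> nat \<Rightarrow> nat) \<Rightarrow> bool" where
  "reuse_cond nb dl L T p \<longleftrightarrow>
     (\<forall>x y. nz_block nb dl L x y \<and> nz_block nb dl L (x + T) (y + T * nb)
        \<longrightarrow> p (x + T) (y + T * nb) = p x y)"

text \<open>Entry of H: row (x,r) = row r of block row x, column (y,c) = column c of block column y
  (x,y 1-based, r,c in {0..M-1}). Entry is 1 iff the block is nonzero and c = (r + p x y) mod M.\<close>
definition H_entry :: "nat \<Rightarrow> nat \<Rightarrow> nat \<Rightarrow> nat \<Rightarrow> (nat \<Rightarrow> nat \<Rightarrow> nat)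
     \<Rightarrow> nat \<times> nat \<Rightarrow> nat \<times> nat \<Rightarrow> bool" where
  "H_entry nb dl L M p chk bn \<longleftrightarrow>
     (case chk of (x, r) \<Rightarrow> case bn of (y, c) \<Rightarrow>
        r < M \<and> c < M \<and> nz_block nb dl L x y \<and> c = (r + p x y) mod M)"

text \<open>A cycle of length 2k (k >= 2) in the bipartite Tanner graph given by the adjacency
  relation adj (check node, bit node): distinct check nodes cs!0..cs!(k-1), distinct bit nodes
  bs!0..bs!(k-1), with cs!i - bs!i - cs!((i+1) mod k).\<close>
definition tanner_cycle :: "('c \<Rightarrow> 'b \<Rightarrow> bool) \<Rightarrow> 'c list \<Rightarrow> 'b list \<Rightarrow> bool" where
  "tanner_cycle adj cs bs \<longleftrightarrow>
     length cs = length bs \<and> length cs \<ge> 2 \<and> distinct cs \<and> distinct bs \<and>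
     (\<forall>i < length cs. adj (cs ! i) (bs ! i) \<and> adj (cs ! ((i + 1) mod length cs)) (bs ! i))"

text \<open>Girth: length of a shortest cycle (infinity if acyclic).\<close>
definition girth :: "('c \<Rightarrow> 'b \<Rightarrow> bool) \<Rightarrow> enat" where
  "girth adj = (INF cb \<in> {(cs, bs). tanner_cycle adj cs bs}. enat (2 * length (fst cb)))"

end

theory Submission
  imports Defs "HOL-Number_Theory.Cong"
begin

(* The Tanner graph of any quasi-cyclic matrix built from circulants
   I_(q x y) on a block pattern B contains a 6-cycle through block rows x0,x1,x2
   and block columns y0,y1,y2 as soon as the six blocks on the closed walk
   x0-y0-x1-y1-x2-y2-x0 are nonzero and the alternating sum of their shifts
   vanishes modulo M (Fossorier's cycle condition); this is qc_six_cycle below.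
   For an SC-LDPC matrix with reuse T = 1, the shift of block (k+1+d, 1+k*nb)
   depends only on the offset d (reuse1_shift).  Taking rows 3, 2, 4 and the
   first columns of time steps 1, 2, 3, the six shifts read a2, a1, a0, a2, a1,
   a0 with a_d = p (1+d) 1, so the alternating sum is identically zero and the
   cycle condition holds for every choice of shifts.  This needs the offsets
   0, 1, 2 (dl >= 3) and the time steps 1, 2, 3 (L >= 3).  The range condition
   valid_shifts on the shift values is not needed: shifts are only used mod M. *)

lemma girth_le_cycle:
  assumes "tanner_cycle adj cs bs"
  shows "girth adj \<le> enat (2 * length cs)"
proof -
  have "(cs, bs) \<in> {(cs, bs). tanner_cycle adj cs bs}" using assms by simp
  then have "girth adj \<le> enat (2 * length (fst (cs, bs)))"
    unfolding girth_def by (rule INF_lower)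
  then show ?thesis by simp
qed

lemma tanner_cycle_3I:
  assumes "distinct [c0, c1, c2]" and "distinct [b0, b1, b2]"
    and "adj c0 b0" "adj c1 b0" "adj c1 b1" "adj c2 b1" "adj c2 b2" "adj c0 b2"
  shows "tanner_cycle adj [c0, c1, c2] [b0, b1, b2]"
proof -
  have "adj ([c0, c1, c2] ! i) ([b0, b1, b2] ! i)
      \<and> adj ([c0, c1, c2] ! ((i + 1) mod 3)) ([b0, b1, b2] ! i)" if "i < 3" for i
  proof -
    consider "i = 0" | "i = 1" | "i = 2" using \<open>i < 3\<close> by arith
    then show ?thesis using assms by cases auto
  qed
  then show ?thesis using assms unfolding tanner_cycle_def by auto
qed

definition qc_adj :: "nat \<Rightarrow> (nat \<Rightarrow> nat \<Rightarrow> bool) \<Rightarrow> (nat \<Rightarrow> nat \<Rightarrow> nat)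
    \<Rightarrow> nat \<times> nat \<Rightarrow> nat \<times> nat \<Rightarrow> bool" where
  "qc_adj M B q chk bn \<longleftrightarrow>
     (case chk of (x, r) \<Rightarrow> case bn of (y, c) \<Rightarrow>
        r < M \<and> c < M \<and> B x y \<and> c = (r + q x y) mod M)"

lemma H_entry_qc_adj: "H_entry nb dl L M p = qc_adj M (nz_block nb dl L) p"
  by (simp add: fun_eq_iff H_entry_def qc_adj_def)

lemma circulant_row_exists:
  fixes c M q :: nat
  assumes "c < M"
  shows "\<exists>r < M. (r + q) mod M = c"
proof (intro exI conjI)
  let ?r = "(c + M - q mod M) mod M"
  show "?r < M" using assms by simp
  have "(?r + q) mod M = (c + M - q mod M + q mod M) mod M"
    by (simp add: mod_add_left_eq mod_add_right_eq)
  also have "\<dots> = (c + M) mod M"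
  proof -
    have "q mod M < M" using assms by simp
    then show ?thesis by simp
  qed
  also have "\<dots> = c" using assms by simp
  finally show "(?r + q) mod M = c" .
qed

lemma qc_six_cycle:
  assumes M: "0 < M"
    and rows: "distinct [x0, x1, x2]" and cols: "distinct [y0, y1, y2]"
    and B: "B x0 y0" "B x1 y0" "B x1 y1" "B x2 y1" "B x2 y2" "B x0 y2"
    and sum: "[q x0 y0 + q x1 y1 + q x2 y2 = q x1 y0 + q x2 y1 + q x0 y2] (mod M)"
  shows "\<exists>cs bs. tanner_cycle (qc_adj M B q) cs bs \<and> length cs = 3"
proof -
  define c0 where "c0 = q x0 y0 mod M"
  have c0_lt: "c0 < M" using M by (simp add: c0_def)
  obtain r1 where r1: "r1 < M" "(r1 + q x1 y0) mod M = c0"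
    using circulant_row_exists[OF c0_lt] by blast
  define c1 where "c1 = (r1 + q x1 y1) mod M"
  have c1_lt: "c1 < M" using M by (simp add: c1_def)
  obtain r2 where r2: "r2 < M" "(r2 + q x2 y1) mod M = c1"
    using circulant_row_exists[OF c1_lt] by blast
  define c2 where "c2 = (r2 + q x2 y2) mod M"
  have c2_lt: "c2 < M" using M by (simp add: c2_def)
  text \<open>Going once around the walk returns to the start row 0 of block row x0.\<close>
  have step2: "[c2 = r2 + q x2 y2] (mod M)" by (simp add: c2_def cong_def)
  have step1: "[r2 + q x2 y1 = r1 + q x1 y1] (mod M)" using r2(2) by (simp add: c1_def cong_def)
  have step0: "[r1 + q x1 y0 = q x0 y0] (mod M)" using r1(2) by (simp add: c0_def cong_def)
  have "[c2 + q x2 y1 + q x1 y0 = (r2 + q x2 y1) + (q x2 y2 + q x1 y0)] (mod M)"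
    using cong_add[OF step2 cong_refl[of "q x2 y1 + q x1 y0"]] by (simp add: ac_simps)
  also have "[(r2 + q x2 y1) + (q x2 y2 + q x1 y0) = (r1 + q x1 y0) + (q x1 y1 + q x2 y2)] (mod M)"
    using cong_add[OF step1 cong_refl[of "q x2 y2 + q x1 y0"]] by (simp add: ac_simps)
  also have "[(r1 + q x1 y0) + (q x1 y1 + q x2 y2) = q x0 y0 + q x1 y1 + q x2 y2] (mod M)"
    using cong_add[OF step0 cong_refl[of "q x1 y1 + q x2 y2"]] by (simp add: ac_simps)
  also note sum
  finally have "[c2 + (q x2 y1 + q x1 y0) = q x0 y2 + (q x2 y1 + q x1 y0)] (mod M)"
    by (simp only: ac_simps)
  then have "[c2 = q x0 y2] (mod M)" by (simp only: cong_add_rcancel_nat)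
  then have close: "c2 = q x0 y2 mod M" by (simp add: cong_def c2_def)
  note c_lt = c0_lt c1_lt c2_lt
  have "tanner_cycle (qc_adj M B q) [(x0, 0), (x1, r1), (x2, r2)] [(y0, c0), (y1, c1), (y2, c2)]"
  proof (rule tanner_cycle_3I)
    show "distinct [(x0, 0), (x1, r1), (x2, r2)]" using rows by simp
    show "distinct [(y0, c0), (y1, c1), (y2, c2)]" using cols by simp
    show "qc_adj M B q (x0, 0) (y0, c0)" using M c_lt B(1) by (simp add: qc_adj_def c0_def)
    show "qc_adj M B q (x1, r1) (y0, c0)" using r1 c_lt B(2) by (simp add: qc_adj_def)
    show "qc_adj M B q (x1, r1) (y1, c1)" using r1 c_lt B(3) by (simp add: qc_adj_def c1_def)
    show "qc_adj M B q (x2, r2) (y1, c1)" using r2 c_lt B(4) by (simp add: qc_adj_def)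
    show "qc_adj M B q (x2, r2) (y2, c2)" using r2 c_lt B(5) by (simp add: qc_adj_def c2_def)
    show "qc_adj M B q (x0, 0) (y2, c2)" using M c_lt B(6) close by (simp add: qc_adj_def)
  qed
  moreover have "length [(x0, 0 :: nat), (x1, r1), (x2, r2)] = 3" by simp
  ultimately show ?thesis by blast
qed

lemma tblk_first_column:
  assumes "nb \<ge> 1"
  shows "tblk nb (1 + k * nb) = k + 1"
proof -
  have "1 + k * nb + nb - 1 = (k + 1) * nb" by simp
  then show ?thesis using assms by (simp add: tblk_def)
qed

lemma nz_block_first_column:
  assumes "nb \<ge> 1" and "k < L" and "d < dl"
  shows "nz_block nb dl L (k + 1 + d) (1 + k * nb)"
proof -
  have "1 + k * nb \<le> (k + 1) * nb" using assms(1) by simp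
  also have "\<dots> \<le> L * nb" using assms(2) by (intro mult_le_mono1) simp
  also have "\<dots> = nb * L" by (rule mult.commute)
  finally have "1 + k * nb \<le> nb * L" .
  then show ?thesis
    unfolding nz_block_def tblk_first_column[OF assms(1)] using assms by simp
qed

lemma reuse1_shift:
  assumes nb: "nb \<ge> 1" and reuse: "reuse_cond nb dl L 1 p" and "k < L" and d: "d < dl"
  shows "p (k + 1 + d) (1 + k * nb) = p (1 + d) 1"
  using \<open>k < L\<close>
proof (induction k)
  case 0
  then show ?case by simp
next
  case (Suc k)
  have "nz_block nb dl L (k + 1 + d) (1 + k * nb)"
    and "nz_block nb dl L (k + 1 + d + 1) (1 + k * nb + 1 * nb)"
    using nz_block_first_column[OF nb _ d, of k] nz_block_first_column[OF nb _ d, of "Suc k"]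
      Suc.prems by (simp_all add: algebra_simps)
  then have "p (k + 1 + d + 1) (1 + k * nb + 1 * nb) = p (k + 1 + d) (1 + k * nb)"
    using reuse unfolding reuse_cond_def by blast
  then show ?case using Suc by (simp add: algebra_simps)
qed

theorem lemma1:
  fixes nb dl L M :: nat and p :: "nat \<Rightarrow> nat \<Rightarrow> nat"
  assumes "nb \<ge> 1" and "dl \<ge> 3" and "L \<ge> 3" and "M \<ge> 1"
    and "valid_shifts nb dl L M p"
    and "reuse_cond nb dl L 1 p"
  shows "(\<exists>cs bs. tanner_cycle (H_entry nb dl L M p) cs bs \<and> length cs = 3)
         \<and> girth (H_entry nb dl L M p) \<le> 6"
proof -
  have nz: "nz_block nb dl L (k + 1 + d) (1 + k * nb)" if "k < 3" "d < 3" for k d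
    using nz_block_first_column that assms(1-3) by simp
  have shift: "p (k + 1 + d) (1 + k * nb) = p (1 + d) 1" if "k < 3" "d < 3" for k d
    using reuse1_shift that assms(1-3,6) by simp
  have "\<exists>cs bs. tanner_cycle (qc_adj M (nz_block nb dl L) p) cs bs \<and> length cs = 3"
  proof (rule qc_six_cycle)
    have "p 2 (1 + nb) = p 1 1" "p 4 (1 + nb) = p 3 1"
      and "p 4 (1 + 2 * nb) = p 2 1" "p 3 (1 + 2 * nb) = p 1 1"
      using shift[of 1 0] shift[of 1 2] shift[of 2 1] shift[of 2 0]
      by (simp_all add: eval_nat_numeral)
    then show "[p 3 1 + p 2 (1 + nb) + p 4 (1 + 2 * nb)
         = p 2 1 + p 4 (1 + nb) + p 3 (1 + 2 * nb)] (mod M)"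
      by (simp add: ac_simps)
  qed (use assms(1,4) nz[of 0 2] nz[of 0 1] nz[of 1 0] nz[of 1 2] nz[of 2 1] nz[of 2 0]
       in \<open>simp_all add: eval_nat_numeral\<close>)
  then obtain cs bs where cyc: "tanner_cycle (H_entry nb dl L M p) cs bs" "length cs = 3"
    by (auto simp: H_entry_qc_adj)
  have "girth (H_entry nb dl L M p) \<le> 6"
    using girth_le_cycle[OF cyc(1)] cyc(2) by (simp add: numeral_eq_enat)
  with cyc show ?thesis by blast
qed

end
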